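(* Let $K$ be any number field. There do not exist finite extensions $L/K$ and $M/K$ with $[L:K]=4$, $t_K(L)=1$ and $\tau_K(M,L)=2$.
   Context: Extensions lie in a fixed algebraic closure. For $L/K$ with Galois closure $\tilde L$, $G=\mathrm{Gal}(\tilde L/K)$, $H=\mathrm{Gal}(\tilde L/L)$, the ascending index is $t_K(L)=[G:H^G]$ where $H^G$ is the normal closure of $H$ in $G$ (the degree of the largest subextension of $L/K$ Galois over $K$). For $M/K$, if $L_1,\dots,L_a$ are all the distinct subfields of $M$ isomorphic to $L$ over $K$, then $\tau_K(M,L)=[L_1\cap\cdots\cap L_a:K]$ if $a\ge1$ and $\tau_K(M,L)=0$ if $a=0$. *)

theory Defs
  imports Complex_Main
begin

text \<open>All fields live inside the fixed algebraically closed field of complex numbers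
  (every number field and its finite extensions embed into the algebraic closure of Q,
  which sits inside C).\<close>

definition is_subfield :: "complex set \<Rightarrow> bool" where
  "is_subfield S \<longleftrightarrow> 0 \<in> S \<and> 1 \<in> S \<and>
     (\<forall>x\<in>S. \<forall>y\<in>S. x + y \<in> S \<and> x * y \<in> S) \<and>
     (\<forall>x\<in>S. - x \<in> S) \<and> (\<forall>x\<in>S. x \<noteq> 0 \<longrightarrow> inverse x \<in> S)"

definition lin_indep_over :: "complex set \<Rightarrow> complex set \<Rightarrow> bool" where
  "lin_indep_over K B \<longleftrightarrow>
     (\<forall>c. (\<forall>b\<in>B. c b \<in> K) \<and> (\<Sum>b\<in>B. c b * b) = 0 \<longrightarrow> (\<forall>b\<in>B. c b = 0))"

definition span_over :: "complex set \<Rightarrow> complex set \<Rightarrow> complex set" where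
  "span_over K B = {x. \<exists>c. (\<forall>b\<in>B. c b \<in> K) \<and> x = (\<Sum>b\<in>B. c b * b)}"

definition is_basis_over :: "complex set \<Rightarrow> complex set \<Rightarrow> complex set \<Rightarrow> bool" where
  "is_basis_over K L B \<longleftrightarrow> finite B \<and> B \<subseteq> L \<and> lin_indep_over K B \<and> L = span_over K B"

definition ext_degree :: "complex set \<Rightarrow> complex set \<Rightarrow> nat" where
  "ext_degree K L = (if \<exists>B. is_basis_over K L B then card (SOME B. is_basis_over K L B) else 0)"

definition finite_ext :: "complex set \<Rightarrow> complex set \<Rightarrow> bool" where
  "finite_ext K L \<longleftrightarrow> is_subfield K \<and> is_subfield L \<and> K \<subseteq> L \<and> (\<exists>B. is_basis_over K L B)"

definition number_field :: "complex set \<Rightarrow> bool" where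
  "number_field K \<longleftrightarrow> finite_ext \<rat> K"

definition K_embedding :: "complex set \<Rightarrow> complex set \<Rightarrow> (complex \<Rightarrow> complex) \<Rightarrow> bool" where
  "K_embedding K E \<sigma> \<longleftrightarrow>
     (\<forall>x\<in>E. \<forall>y\<in>E. \<sigma> (x + y) = \<sigma> x + \<sigma> y \<and> \<sigma> (x * y) = \<sigma> x * \<sigma> y) \<and>
     \<sigma> 1 = 1 \<and> (\<forall>x\<in>K. \<sigma> x = x) \<and> inj_on \<sigma> E"

definition K_isomorphic :: "complex set \<Rightarrow> complex set \<Rightarrow> complex set \<Rightarrow> bool" where
  "K_isomorphic K E E' \<longleftrightarrow> (\<exists>\<sigma>. K_embedding K E \<sigma> \<and> \<sigma> ` E = E')"

text \<open>E/K is Galois (= normal, characteristic 0): every K-embedding of E into the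
  algebraic closure maps E into itself.\<close>
definition galois_over :: "complex set \<Rightarrow> complex set \<Rightarrow> bool" where
  "galois_over K E \<longleftrightarrow> finite_ext K E \<and> (\<forall>\<sigma>. K_embedding K E \<sigma> \<longrightarrow> \<sigma> ` E \<subseteq> E)"

text \<open>Ascending index t_K(L): degree of the largest subextension of L/K Galois over K.\<close>
definition asc_index :: "complex set \<Rightarrow> complex set \<Rightarrow> nat" where
  "asc_index K L = Max {ext_degree K E | E. K \<subseteq> E \<and> E \<subseteq> L \<and> galois_over K E}"

text \<open>tau_K(M,L): degree over K of the intersection of all subfields of M that are
  K-isomorphic to L, or 0 if there are none.\<close>
definition tau_index :: "complex set \<Rightarrow> complex set \<Rightarrow> complex set \<Rightarrow> nat" where
  "tau_index K M L =
     (let S = {L'. L' \<subseteq> M \<and> K_isomorphic K L L'} in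
      if S = {} then 0 else ext_degree K (\<Inter> S))"

end

theory Submission
  imports Defs
begin

(* If tau_K(M,L) = 2, the intersection F of the K-conjugates of L inside M is a quadratic
   extension of K lying in one conjugate sigma(L); pulling F back along sigma gives a quadratic
   subextension of L. A quadratic extension is normal, since the conjugates of x outside K are
   the roots x and p - x of x^2 = p x + q. Hence t_K(L) >= 2.
   Since fields are subsets of C rather than types, the library's linear algebra does not
   apply; the Steinitz exchange lemma is proved directly, making degrees well defined and
   bounded by [L:K]. *)

lemma subfield_0: "is_subfield S \<Longrightarrow> 0 \<in> S"
  and subfield_1: "is_subfield S \<Longrightarrow> 1 \<in> S"
  and subfield_add: "is_subfield S \<Longrightarrow> x \<in> S \<Longrightarrow> y \<in> S \<Longrightarrow> x + y \<in> S"
  and subfield_mult: "is_subfield S \<Longrightarrow> x \<in> S \<Longrightarrow> y \<in> S \<Longrightarrow> x * y \<in> S"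
  and subfield_uminus: "is_subfield S \<Longrightarrow> x \<in> S \<Longrightarrow> - x \<in> S"
  by (simp_all add: is_subfield_def)

lemma subfield_inverse: "is_subfield S \<Longrightarrow> x \<in> S \<Longrightarrow> inverse x \<in> S"
  by (cases "x = 0") (auto simp add: is_subfield_def)

lemma subfield_diff: "is_subfield S \<Longrightarrow> x \<in> S \<Longrightarrow> y \<in> S \<Longrightarrow> x - y \<in> S"
  by (metis diff_conv_add_uminus subfield_add subfield_uminus)

lemma subfield_divide: "is_subfield S \<Longrightarrow> x \<in> S \<Longrightarrow> y \<in> S \<Longrightarrow> x / y \<in> S"
  by (simp add: divide_inverse subfield_inverse subfield_mult)

lemma subfield_sum:
  assumes "is_subfield S" "\<And>a. a \<in> A \<Longrightarrow> f a \<in> S"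
  shows "sum f A \<in> S"
  using assms(2)
  by (induction A rule: infinite_finite_induct) (auto simp: subfield_0 subfield_add assms(1))

lemma subfield_Inter: "S \<noteq> {} \<Longrightarrow> (\<And>X. X \<in> S \<Longrightarrow> is_subfield X) \<Longrightarrow> is_subfield (\<Inter>S)"
  unfolding is_subfield_def by blast

lemma span_over_empty: "span_over K {} = {0}"
  by (simp add: span_over_def)

lemma span_over_diff:
  assumes "is_subfield K" "x \<in> span_over K B" "y \<in> span_over K B"
  shows "x - y \<in> span_over K B"
proof -
  obtain c d where "\<forall>b\<in>B. c b \<in> K" "x = (\<Sum>b\<in>B. c b * b)" "\<forall>b\<in>B. d b \<in> K" "y = (\<Sum>b\<in>B. d b * b)"
    using assms(2,3) unfolding span_over_def by blast
  then have "\<forall>b\<in>B. c b - d b \<in> K" "x - y = (\<Sum>b\<in>B. (c b - d b) * b)"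
    by (auto simp: subfield_diff assms(1) sum_subtractf left_diff_distrib)
  then show ?thesis unfolding span_over_def by (intro CollectI exI[of _ "\<lambda>b. c b - d b"]) simp
qed

lemma span_over_scale:
  assumes "is_subfield K" "a \<in> K" "x \<in> span_over K B"
  shows "a * x \<in> span_over K B"
proof -
  obtain c where "\<forall>b\<in>B. c b \<in> K" "x = (\<Sum>b\<in>B. c b * b)"
    using assms(3) unfolding span_over_def by blast
  then have "\<forall>b\<in>B. a * c b \<in> K" "a * x = (\<Sum>b\<in>B. (a * c b) * b)"
    by (auto simp: subfield_mult assms(1,2) sum_distrib_left mult.assoc)
  then show ?thesis unfolding span_over_def by (intro CollectI exI[of _ "\<lambda>b. a * c b"]) simp
qed

lemma span_over_insert:
  assumes "finite B" "b \<notin> B" "x \<in> span_over K (insert b B)"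
  obtains a where "a \<in> K" "x - a * b \<in> span_over K B"
proof -
  obtain c where "\<forall>y\<in>insert b B. c y \<in> K" "x = (\<Sum>y\<in>insert b B. c y * y)"
    using assms(3) unfolding span_over_def by blast
  then have "c b \<in> K" "x - c b * b = (\<Sum>y\<in>B. c y * y)" "\<forall>y\<in>B. c y \<in> K"
    using assms(1,2) by auto
  then show ?thesis using that unfolding span_over_def by blast
qed

text \<open>Unlike the set notion \<^const>\<open>lin_indep_over\<close>, independence of a family also
  excludes repeated vectors.\<close>
definition lin_indep_family :: "complex set \<Rightarrow> ('i \<Rightarrow> complex) \<Rightarrow> 'i set \<Rightarrow> bool" where
  "lin_indep_family K v I \<longleftrightarrow>
     (\<forall>d. (\<forall>i\<in>I. d i \<in> K) \<and> (\<Sum>i\<in>I. d i * v i) = 0 \<longrightarrow> (\<forall>i\<in>I. d i = 0))"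

lemma lin_indep_family_inj_on:
  assumes K: "is_subfield K" and I: "finite I" and v: "lin_indep_family K v I"
  shows "inj_on v I"
proof
  fix i j assume ij: "i \<in> I" "j \<in> I" "v i = v j"
  show "i = j"
  proof (rule ccontr)
    assume "i \<noteq> j"
    define d :: "'a \<Rightarrow> complex" where "d k = (if k = i then 1 else if k = j then -1 else 0)" for k
    have "(\<Sum>k\<in>I. d k * v k) = (\<Sum>k\<in>{i, j}. d k * v k)"
      using I ij by (intro sum.mono_neutral_right) (auto simp: d_def)
    also have "\<dots> = 0" using \<open>i \<noteq> j\<close> ij(3) by (simp add: d_def)
    finally have "(\<Sum>k\<in>I. d k * v k) = 0" .
    moreover have "\<forall>k\<in>I. d k \<in> K"
      using K by (simp add: d_def subfield_0 subfield_1 subfield_uminus)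
    ultimately have "\<forall>k\<in>I. d k = 0" using v unfolding lin_indep_family_def by blast
    then have "d i = 0" using ij(1) by blast
    then show False by (simp add: d_def)
  qed
qed

lemma lin_indep_over_image:
  assumes "inj_on v I" "lin_indep_family K v I"
  shows "lin_indep_over K (v ` I)"
  unfolding lin_indep_over_def
proof (intro allI impI)
  fix c assume c: "(\<forall>b\<in>v ` I. c b \<in> K) \<and> (\<Sum>b\<in>v ` I. c b * b) = 0"
  then have "(\<Sum>i\<in>I. c (v i) * v i) = 0" using sum.reindex[OF assms(1), of "\<lambda>b. c b * b"] by simp
  then have "\<forall>i\<in>I. c (v i) = 0"
    using c assms(2) unfolding lin_indep_family_def by (auto dest!: spec[of _ "c \<circ> v"])
  then show "\<forall>b\<in>v ` I. c b = 0" by blast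
qed

lemma lin_indep_over_subset:
  assumes "lin_indep_over K C" "D \<subseteq> C" "finite C" "0 \<in> K"
  shows "lin_indep_over K D"
  unfolding lin_indep_over_def
proof (intro allI impI)
  fix d assume d: "(\<forall>b\<in>D. d b \<in> K) \<and> (\<Sum>b\<in>D. d b * b) = 0"
  define c where "c b = (if b \<in> D then d b else 0)" for b
  have "(\<Sum>b\<in>C. c b * b) = (\<Sum>b\<in>D. d b * b)"
    using assms(2,3) by (intro sum.mono_neutral_cong_right) (auto simp: c_def)
  moreover have "\<forall>b\<in>C. c b \<in> K" using assms(4) d by (simp add: c_def)
  ultimately have "\<forall>b\<in>C. c b = 0" using assms(1) d unfolding lin_indep_over_def by metis
  then show "\<forall>b\<in>D. d b = 0" using assms(2) unfolding c_def by (metis subsetD)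
qed

lemma lin_indep_over_zero_notin:
  assumes "is_subfield K" "finite C" "lin_indep_over K C"
  shows "0 \<notin> C"
proof
  assume "0 \<in> C"
  then have "lin_indep_over K {0}"
    using lin_indep_over_subset[OF assms(3) _ assms(2) subfield_0[OF assms(1)]] by simp
  from this[unfolded lin_indep_over_def, rule_format, of "\<lambda>_. 1" 0] show False
    using subfield_1[OF assms(1)] by simp
qed

lemma lin_indep_family_shear:
  assumes K: "is_subfield K" and C: "finite C" "lin_indep_over K C" and c0: "c0 \<in> C"
    and r: "\<And>c. c \<in> C \<Longrightarrow> r c \<in> K"
  shows "lin_indep_family K (\<lambda>c. c - r c * c0) (C - {c0})"
  unfolding lin_indep_family_def
proof (intro allI impI)
  fix d assume d: "(\<forall>c\<in>C - {c0}. d c \<in> K) \<and> (\<Sum>c\<in>C - {c0}. d c * (c - r c * c0)) = 0"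
  define s where "s = (\<Sum>c\<in>C - {c0}. d c * r c)"
  define e where "e c = (if c = c0 then - s else d c)" for c
  have "(\<Sum>c\<in>C. e c * c) = (\<Sum>c\<in>C - {c0}. d c * c) - s * c0"
    using C(1) c0 by (simp add: sum.remove e_def)
  also have "\<dots> = (\<Sum>c\<in>C - {c0}. d c * c - d c * r c * c0)"
    by (simp add: s_def sum_subtractf sum_distrib_right)
  also have "\<dots> = (\<Sum>c\<in>C - {c0}. d c * (c - r c * c0))"
    by (simp add: algebra_simps)
  finally have "(\<Sum>c\<in>C. e c * c) = 0" using d by simp
  moreover have "\<forall>c\<in>C. e c \<in> K"
    using d r K unfolding e_def s_def by (auto intro!: subfield_uminus subfield_sum subfield_mult)
  ultimately have "\<forall>c\<in>C. e c = 0" using C(2) unfolding lin_indep_over_def by blast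
  then show "\<forall>c\<in>C - {c0}. d c = 0" by (metis DiffE e_def singletonI)
qed

lemma lin_indep_over_card_le:
  assumes K: "is_subfield K" and B: "finite B"
  shows "finite C \<Longrightarrow> C \<subseteq> span_over K B \<Longrightarrow> lin_indep_over K C \<Longrightarrow> card C \<le> card B"
  using B
proof (induction B arbitrary: C rule: finite_induct)
  case empty
  have "0 \<notin> C" using lin_indep_over_zero_notin[OF K empty.prems(1,3)] .
  then have "C = {}" using empty.prems(2) by (auto simp: span_over_empty)
  then show ?case by simp
next
  case (insert b B C)
  have "\<forall>c\<in>C. \<exists>a. a \<in> K \<and> c - a * b \<in> span_over K B"
    using span_over_insert[OF insert.hyps] insert.prems(2) by blast
  then obtain a where a: "\<And>c. c \<in> C \<Longrightarrow> a c \<in> K \<and> c - a c * b \<in> span_over K B"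
    by metis
  show ?case
  proof (cases "\<forall>c\<in>C. a c = 0")
    case True
    then have "C \<subseteq> span_over K B" using a by force
    then have "card C \<le> card B" using insert.IH insert.prems by blast
    then show ?thesis using insert.hyps by simp
  next
    case False
    then obtain c0 where c0: "c0 \<in> C" "a c0 \<noteq> 0" by blast
    define r where "r c = a c / a c0" for c
    define g where "g c = c - r c * c0" for c
    have r: "r c \<in> K" if "c \<in> C" for c
      using a c0 that K by (simp add: r_def subfield_divide)
    have "g c \<in> span_over K B" if "c \<in> C" for c
    proof -
      have "g c = (c - a c * b) - r c * (c0 - a c0 * b)"
        using c0(2) by (simp add: g_def r_def field_simps)
      then show ?thesis using a[OF that] a[OF c0(1)] r[OF that] K
        by (simp add: span_over_diff span_over_scale)
    qed
    then have "g ` (C - {c0}) \<subseteq> span_over K B" by blast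
    moreover have indep: "lin_indep_family K g (C - {c0})"
      unfolding g_def using lin_indep_family_shear[OF K insert.prems(1,3) c0(1), of r] r by blast
    moreover have inj: "inj_on g (C - {c0})"
      using lin_indep_family_inj_on[OF K _ indep] insert.prems(1) by blast
    ultimately have "card (g ` (C - {c0})) \<le> card B"
      using insert.IH[OF _ _ lin_indep_over_image[OF inj indep]] insert.prems(1) by simp
    then have "card C - 1 \<le> card B"
      using card_image[OF inj] card_Diff_singleton[OF c0(1)] by simp
    moreover have "card (insert b B) = Suc (card B)" using insert.hyps by simp
    ultimately show ?thesis by linarith
  qed
qed

lemma ext_degree_eq_card:
  assumes K: "is_subfield K" and B: "is_basis_over K E B"
  shows "ext_degree K E = card B"
proof -
  have le: "card C \<le> card D" if "is_basis_over K E C" "is_basis_over K E D" for C D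
    using lin_indep_over_card_le[OF K, of D C] that unfolding is_basis_over_def by blast
  have "is_basis_over K E (SOME B. is_basis_over K E B)" using B by (rule someI)
  then have "card (SOME B. is_basis_over K E B) = card B" using le B by (meson le_antisym)
  then show ?thesis using B unfolding ext_degree_def by auto
qed

lemma ext_degree_basis:
  assumes "ext_degree K E \<noteq> 0"
  obtains B where "is_basis_over K E B" "card B = ext_degree K E"
proof -
  have ex: "\<exists>B. is_basis_over K E B" using assms unfolding ext_degree_def by presburger
  then have "is_basis_over K E (SOME B. is_basis_over K E B)" by (rule someI_ex)
  then show ?thesis using that ex unfolding ext_degree_def by simp
qed

lemma ext_degree_mono:
  assumes "finite_ext K E" "finite_ext K L" "E \<subseteq> L"
  shows "ext_degree K E \<le> ext_degree K L"
proof -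
  obtain B C where B: "is_basis_over K E B" and C: "is_basis_over K L C" and K: "is_subfield K"
    using assms(1,2) unfolding finite_ext_def by blast
  then have "card B \<le> card C"
    using lin_indep_over_card_le[OF K] assms(3) unfolding is_basis_over_def by blast
  then show ?thesis using ext_degree_eq_card[OF K] B C by simp
qed

lemma degree_two_quadratic:
  assumes K: "is_subfield K" and E: "is_subfield E" and deg: "ext_degree K E = 2"
    and x: "x \<in> E" "x \<notin> K"
  shows "\<exists>p\<in>K. \<exists>q\<in>K. x * x = p * x + q"
proof (rule ccontr)
  assume no_rel: "\<not> ?thesis"
  have "x * x \<noteq> 1 * x + 0" "x * x \<noteq> 0 * x + 1"
    using no_rel subfield_0[OF K] subfield_1[OF K] by blast+
  then have distinct: "1 \<noteq> x" "x \<noteq> x * x" "1 \<noteq> x * x"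
    using x(2) subfield_1[OF K] by auto
  have "lin_indep_over K {1, x, x * x}"
    unfolding lin_indep_over_def
  proof (intro allI impI)
    fix c assume c: "(\<forall>b\<in>{1, x, x * x}. c b \<in> K) \<and> (\<Sum>b\<in>{1, x, x * x}. c b * b) = 0"
    then have cK: "c 1 \<in> K" "c x \<in> K" "c (x * x) \<in> K"
      and rel: "c 1 + c x * x + c (x * x) * (x * x) = 0"
      using distinct by (simp_all add: add.assoc)
    have c2: "c (x * x) = 0"
    proof (rule ccontr)
      assume "c (x * x) \<noteq> 0"
      then have "x * x = (- c x / c (x * x)) * x + (- c 1 / c (x * x))"
        using rel by (simp add: field_simps) (metis add.commute add_eq_0_iff2 mult.commute)
      moreover have "- c x / c (x * x) \<in> K" "- c 1 / c (x * x) \<in> K"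
        using cK K by (simp_all add: subfield_divide subfield_uminus)
      ultimately show False using no_rel by blast
    qed
    have c1: "c x = 0"
    proof (rule ccontr)
      assume "c x \<noteq> 0"
      then have "x = - c 1 / c x"
        using rel c2 by (simp add: field_simps) (metis add.commute add_eq_0_iff2 mult.commute)
      moreover have "- c 1 / c x \<in> K" using cK K by (simp add: subfield_divide subfield_uminus)
      ultimately show False using x(2) by simp
    qed
    have "c 1 = 0" using rel c1 c2 by simp
    then show "\<forall>b\<in>{1, x, x * x}. c b = 0" using c1 c2 by simp
  qed
  moreover obtain B where B: "is_basis_over K E B" "card B = 2"
    using ext_degree_basis[of K E] deg by auto
  moreover have "{1, x, x * x} \<subseteq> E" using x(1) E by (simp add: subfield_1 subfield_mult)
  ultimately have "card {1, x, x * x} \<le> 2"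
    using lin_indep_over_card_le[OF K] unfolding is_basis_over_def by (metis finite.emptyI finite.insertI)
  then show False using distinct by simp
qed

lemma galois_over_degree_two:
  assumes K: "is_subfield K" and E: "is_subfield E" "K \<subseteq> E" and deg: "ext_degree K E = 2"
  shows "galois_over K E"
  unfolding galois_over_def
proof (intro conjI allI impI)
  show "finite_ext K E"
    using ext_degree_basis[of K E] deg K E unfolding finite_ext_def by (metis zero_neq_numeral)
next
  fix \<sigma> assume \<sigma>: "K_embedding K E \<sigma>"
  have hom: "\<forall>x\<in>E. \<forall>y\<in>E. \<sigma> (x + y) = \<sigma> x + \<sigma> y \<and> \<sigma> (x * y) = \<sigma> x * \<sigma> y"
    and fix_K: "\<forall>x\<in>K. \<sigma> x = x" using \<sigma> unfolding K_embedding_def by blast+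
  show "\<sigma> ` E \<subseteq> E"
  proof
    fix t assume "t \<in> \<sigma> ` E"
    then obtain x where x: "x \<in> E" "t = \<sigma> x" by blast
    show "t \<in> E"
    proof (cases "x \<in> K")
      case True
      then show ?thesis using x fix_K by simp
    next
      case False
      then obtain p q where pq: "p \<in> K" "q \<in> K" "x * x = p * x + q"
        using degree_two_quadratic[OF K E(1) deg x(1)] by blast
      then have "p \<in> E" "q \<in> E" using E(2) by auto
      then have "t * t = p * t + q"
        using hom fix_K x pq subfield_mult[OF E(1)] by (metis (no_types, lifting))
      then have "(t - x) * (t - (p - x)) = 0"
        using pq(3) by (simp add: algebra_simps)
      then have "t = x \<or> t = p - x" by simp
      then show ?thesis using x \<open>p \<in> E\<close> subfield_diff[OF E(1)] by auto
    qed
  qed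
qed

lemma asc_index_ge:
  assumes L: "finite_ext K L" and E: "K \<subseteq> E" "E \<subseteq> L" "galois_over K E"
  shows "ext_degree K E \<le> asc_index K L"
proof -
  define A where "A = {ext_degree K E | E. K \<subseteq> E \<and> E \<subseteq> L \<and> galois_over K E}"
  have "A \<subseteq> {..ext_degree K L}"
    using ext_degree_mono[OF _ L] unfolding A_def galois_over_def by auto
  then have "finite A" by (rule finite_subset) simp
  moreover have "ext_degree K E \<in> A" unfolding A_def using E by blast
  ultimately show ?thesis unfolding asc_index_def A_def[symmetric] by simp
qed

lemma K_embedding_0:
  assumes "K_embedding K E \<sigma>" "is_subfield E"
  shows "\<sigma> 0 = 0"
proof -
  have "\<sigma> (0 + 0) = \<sigma> 0 + \<sigma> 0" using assms subfield_0 unfolding K_embedding_def by blast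
  then show ?thesis by simp
qed

lemma K_embedding_uminus:
  assumes "K_embedding K E \<sigma>" "is_subfield E" "x \<in> E"
  shows "\<sigma> (- x) = - \<sigma> x"
proof -
  have "\<sigma> (x + - x) = \<sigma> x + \<sigma> (- x)" using assms subfield_uminus unfolding K_embedding_def by blast
  then show ?thesis using K_embedding_0[OF assms(1,2)] by (simp add: eq_neg_iff_add_eq_0 add.commute)
qed

lemma K_embedding_inverse:
  assumes "K_embedding K E \<sigma>" "is_subfield E" "x \<in> E"
  shows "\<sigma> (inverse x) = inverse (\<sigma> x)"
proof (cases "x = 0")
  case True
  then show ?thesis using K_embedding_0[OF assms(1,2)] by simp
next
  case False
  have "\<sigma> (x * inverse x) = \<sigma> x * \<sigma> (inverse x)" "\<sigma> 1 = 1"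
    using assms subfield_inverse unfolding K_embedding_def by blast+
  then have "\<sigma> x * \<sigma> (inverse x) = 1" using False by simp
  then show ?thesis by (simp add: inverse_unique)
qed

lemma K_embedding_sum:
  assumes "K_embedding K E \<sigma>" "is_subfield E" "\<And>a. a \<in> A \<Longrightarrow> f a \<in> E"
  shows "\<sigma> (sum f A) = (\<Sum>a\<in>A. \<sigma> (f a))"
  using assms(3)
proof (induction A rule: infinite_finite_induct)
  case (insert a A)
  have "sum f A \<in> E" "f a \<in> E" using insert.prems by (auto intro: subfield_sum[OF assms(2)])
  then have "\<sigma> (f a + sum f A) = \<sigma> (f a) + \<sigma> (sum f A)"
    using assms(1) unfolding K_embedding_def by blast
  then show ?case using insert by simp
qed (simp_all add: K_embedding_0[OF assms(1,2)])

lemma K_embedding_lincomb: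
  assumes \<sigma>: "K_embedding K E \<sigma>" and E: "is_subfield E" "K \<subseteq> E"
    and B: "B \<subseteq> E" and c: "\<And>b. b \<in> B \<Longrightarrow> c b \<in> K"
  shows "\<sigma> (\<Sum>b\<in>B. c b * b) = (\<Sum>b\<in>B. c b * \<sigma> b)"
proof -
  have "\<sigma> (\<Sum>b\<in>B. c b * b) = (\<Sum>b\<in>B. \<sigma> (c b * b))"
    using B c E by (intro K_embedding_sum[OF \<sigma> E(1)] subfield_mult) auto
  also have "\<dots> = (\<Sum>b\<in>B. c b * \<sigma> b)"
  proof (rule sum.cong)
    fix b assume "b \<in> B"
    then have "c b \<in> K" "c b \<in> E" "b \<in> E" using B c E(2) by auto
    then show "\<sigma> (c b * b) = c b * \<sigma> b" using \<sigma> unfolding K_embedding_def by simp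
  qed simp
  finally show ?thesis .
qed

lemma K_embedding_subset: "K_embedding K E \<sigma> \<Longrightarrow> F \<subseteq> E \<Longrightarrow> K_embedding K F \<sigma>"
  unfolding K_embedding_def by (auto intro: inj_on_subset)

lemma K_embedding_image_subfield:
  assumes \<sigma>: "K_embedding K E \<sigma>" and E: "is_subfield E"
  shows "is_subfield (\<sigma> ` E)"
  unfolding is_subfield_def
proof (intro conjI ballI impI)
  have hom: "\<forall>x\<in>E. \<forall>y\<in>E. \<sigma> (x + y) = \<sigma> x + \<sigma> y \<and> \<sigma> (x * y) = \<sigma> x * \<sigma> y" "\<sigma> 1 = 1"
    using \<sigma> unfolding K_embedding_def by blast+
  show "0 \<in> \<sigma> ` E" using K_embedding_0[OF \<sigma> E] subfield_0[OF E] by (metis image_eqI)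
  show "1 \<in> \<sigma> ` E" using hom(2) subfield_1[OF E] by (metis image_eqI)
  fix x y assume "x \<in> \<sigma> ` E" "y \<in> \<sigma> ` E"
  then obtain a b where ab: "a \<in> E" "b \<in> E" "x = \<sigma> a" "y = \<sigma> b" by blast
  show "x + y \<in> \<sigma> ` E" "x * y \<in> \<sigma> ` E"
    using ab hom(1) subfield_add[OF E] subfield_mult[OF E] by (metis image_eqI)+
  show "- x \<in> \<sigma> ` E"
    using ab K_embedding_uminus[OF \<sigma> E] subfield_uminus[OF E] by (metis image_eqI)
  show "inverse x \<in> \<sigma> ` E"
    using ab K_embedding_inverse[OF \<sigma> E] subfield_inverse[OF E] by (metis image_eqI)
qed

lemma K_embedding_inv_into:
  assumes \<sigma>: "K_embedding K E \<sigma>" and E: "is_subfield E" "K \<subseteq> E"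
  shows "K_embedding K (\<sigma> ` E) (inv_into E \<sigma>)"
proof -
  have inj: "inj_on \<sigma> E" and hom: "\<forall>x\<in>E. \<forall>y\<in>E. \<sigma> (x + y) = \<sigma> x + \<sigma> y \<and> \<sigma> (x * y) = \<sigma> x * \<sigma> y"
    and one: "\<sigma> 1 = 1" and fix_K: "\<forall>x\<in>K. \<sigma> x = x"
    using \<sigma> unfolding K_embedding_def by blast+
  have inv: "inv_into E \<sigma> (\<sigma> x) = x" if "x \<in> E" for x using inv_into_f_f[OF inj that] .
  show ?thesis
    unfolding K_embedding_def
  proof (intro conjI ballI)
    fix x y assume "x \<in> \<sigma> ` E" "y \<in> \<sigma> ` E"
    then obtain a b where ab: "a \<in> E" "b \<in> E" "x = \<sigma> a" "y = \<sigma> b" by blast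
    show "inv_into E \<sigma> (x + y) = inv_into E \<sigma> x + inv_into E \<sigma> y"
      using ab hom inv subfield_add[OF E(1)] by metis
    show "inv_into E \<sigma> (x * y) = inv_into E \<sigma> x * inv_into E \<sigma> y"
      using ab hom inv subfield_mult[OF E(1)] by metis
  next
    show "inv_into E \<sigma> 1 = 1" using inv[OF subfield_1[OF E(1)]] one by simp
    fix x assume "x \<in> K"
    then show "inv_into E \<sigma> x = x" using inv fix_K E(2) by (metis subsetD)
  qed (rule inj_on_inv_into[OF order_refl])
qed

lemma K_embedding_image_basis:
  assumes \<sigma>: "K_embedding K E \<sigma>" and E: "is_subfield E" "K \<subseteq> E"
    and B: "is_basis_over K F B" and F: "F \<subseteq> E"
  shows "is_basis_over K (\<sigma> ` F) (\<sigma> ` B)"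
proof -
  have fin: "finite B" and BF: "B \<subseteq> F" and indep: "lin_indep_over K B" and span: "F = span_over K B"
    using B unfolding is_basis_over_def by blast+
  have inj: "inj_on \<sigma> B" using \<sigma> BF F unfolding K_embedding_def by (meson inj_on_subset)
  have lincomb: "\<sigma> (\<Sum>b\<in>B. c b * b) = (\<Sum>y\<in>\<sigma> ` B. c (inv_into B \<sigma> y) * y)"
    if "\<And>b. b \<in> B \<Longrightarrow> c b \<in> K" for c
  proof -
    have "\<sigma> (\<Sum>b\<in>B. c b * b) = (\<Sum>b\<in>B. c b * \<sigma> b)"
      using K_embedding_lincomb[OF \<sigma> E, of B c] BF F that by blast
    also have "\<dots> = (\<Sum>y\<in>\<sigma> ` B. c (inv_into B \<sigma> y) * y)"
      using sum.reindex[OF inj, of "\<lambda>y. c (inv_into B \<sigma> y) * y"] by (simp add: inv_into_f_f[OF inj])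
    finally show ?thesis .
  qed
  have "lin_indep_family K \<sigma> B"
    unfolding lin_indep_family_def
  proof (intro allI impI)
    fix d assume d: "(\<forall>b\<in>B. d b \<in> K) \<and> (\<Sum>b\<in>B. d b * \<sigma> b) = 0"
    have "(\<Sum>b\<in>B. d b * b) \<in> E" "0 \<in> E"
      using d BF F E by (auto intro!: subfield_sum subfield_mult subfield_0)
    moreover have "\<sigma> (\<Sum>b\<in>B. d b * b) = \<sigma> 0"
      using K_embedding_lincomb[OF \<sigma> E, of B d] d BF F K_embedding_0[OF \<sigma> E(1)] by auto
    ultimately have "(\<Sum>b\<in>B. d b * b) = 0" using \<sigma> unfolding K_embedding_def inj_on_def by blast
    then show "\<forall>b\<in>B. d b = 0" using d indep unfolding lin_indep_over_def by blast
  qed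
  then have "lin_indep_over K (\<sigma> ` B)" using lin_indep_over_image[OF inj] by blast
  moreover have "\<sigma> ` F = span_over K (\<sigma> ` B)"
  proof
    show "\<sigma> ` F \<subseteq> span_over K (\<sigma> ` B)"
    proof
      fix y assume "y \<in> \<sigma> ` F"
      then obtain c where c: "\<forall>b\<in>B. c b \<in> K" and y: "y = \<sigma> (\<Sum>b\<in>B. c b * b)"
        using span unfolding span_over_def by blast
      show "y \<in> span_over K (\<sigma> ` B)"
        unfolding span_over_def using lincomb[of c] c y inv_into_into[of _ \<sigma> B]
        by (intro CollectI exI[of _ "\<lambda>y. c (inv_into B \<sigma> y)"]) auto
    qed
  next
    show "span_over K (\<sigma> ` B) \<subseteq> \<sigma> ` F"
    proof
      fix y assume "y \<in> span_over K (\<sigma> ` B)"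
      then obtain c where c: "\<forall>z\<in>\<sigma> ` B. c z \<in> K" and y: "y = (\<Sum>z\<in>\<sigma> ` B. c z * z)"
        unfolding span_over_def by blast
      have "y = \<sigma> (\<Sum>b\<in>B. c (\<sigma> b) * b)"
        using lincomb[of "c \<circ> \<sigma>"] c y by (simp add: f_inv_into_f cong: sum.cong)
      moreover have "(\<Sum>b\<in>B. c (\<sigma> b) * b) \<in> F" using span c unfolding span_over_def by auto
      ultimately show "y \<in> \<sigma> ` F" by blast
    qed
  qed
  ultimately show ?thesis using fin BF unfolding is_basis_over_def by blast
qed

lemma K_embedding_image_supset: "K_embedding K E \<sigma> \<Longrightarrow> K \<subseteq> F \<Longrightarrow> K \<subseteq> \<sigma> ` F"
  unfolding K_embedding_def by (metis image_eqI subsetD subsetI)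

lemma K_embedding_image_degree:
  assumes K: "is_subfield K" and \<sigma>: "K_embedding K E \<sigma>" and E: "is_subfield E" "K \<subseteq> E"
    and F: "F \<subseteq> E" "ext_degree K F \<noteq> 0"
  shows "ext_degree K (\<sigma> ` F) = ext_degree K F"
proof -
  obtain B where B: "is_basis_over K F B" "card B = ext_degree K F"
    using ext_degree_basis[OF F(2)] by blast
  have "inj_on \<sigma> B"
    using \<sigma> B(1) F(1) unfolding K_embedding_def is_basis_over_def by (meson inj_on_subset subset_trans)
  then show ?thesis
    using ext_degree_eq_card[OF K K_embedding_image_basis[OF \<sigma> E B(1) F(1)]] B(2)
    by (simp add: card_image)
qed

lemma K_isomorphic_sym:
  assumes "K_isomorphic K L L'" "is_subfield L" "K \<subseteq> L"
  shows "K_isomorphic K L' L"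
proof -
  obtain \<sigma> where \<sigma>: "K_embedding K L \<sigma>" "\<sigma> ` L = L'"
    using assms(1) unfolding K_isomorphic_def by blast
  then have "inv_into L \<sigma> ` L' = L" using inv_into_image_cancel unfolding K_embedding_def by blast
  then show ?thesis
    using K_embedding_inv_into[OF \<sigma>(1) assms(2,3)] \<sigma>(2) unfolding K_isomorphic_def by blast
qed

lemma K_isomorphic_subfield:
  assumes "K_isomorphic K L L'" "is_subfield L" "K \<subseteq> L"
  shows "is_subfield L'" "K \<subseteq> L'"
  using assms K_embedding_image_subfield K_embedding_image_supset unfolding K_isomorphic_def by blast+

lemma tau_index_subextension:
  assumes L: "finite_ext K L" and tau: "tau_index K M L \<noteq> 0"
  obtains E where "is_subfield E" "K \<subseteq> E" "E \<subseteq> L" "ext_degree K E = tau_index K M L"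
proof -
  have K: "is_subfield K" and L_sub: "is_subfield L" "K \<subseteq> L"
    using L unfolding finite_ext_def by blast+
  define S where "S = {L'. L' \<subseteq> M \<and> K_isomorphic K L L'}"
  have S: "S \<noteq> {}" and deg: "tau_index K M L = ext_degree K (\<Inter>S)"
    using tau unfolding tau_index_def S_def Let_def by (auto split: if_splits)
  have "is_subfield (\<Inter>S)" "K \<subseteq> \<Inter>S"
    using K_isomorphic_subfield[OF _ L_sub] subfield_Inter[OF S] unfolding S_def by blast+
  obtain L' where "L' \<in> S" using S by blast
  then have "\<Inter>S \<subseteq> L'" "K_isomorphic K L' L" "is_subfield L'" "K \<subseteq> L'"
    using K_isomorphic_sym[OF _ L_sub] K_isomorphic_subfield[OF _ L_sub] unfolding S_def by blast+
  then obtain \<tau> where \<tau>: "K_embedding K L' \<tau>" "\<tau> ` L' = L"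
    unfolding K_isomorphic_def by blast
  show ?thesis
  proof
    show "is_subfield (\<tau> ` \<Inter>S)"
      using K_embedding_image_subfield[OF K_embedding_subset[OF \<tau>(1)]] \<open>is_subfield (\<Inter>S)\<close>
        \<open>\<Inter>S \<subseteq> L'\<close> by blast
    show "K \<subseteq> \<tau> ` \<Inter>S" using K_embedding_image_supset[OF \<tau>(1)] \<open>K \<subseteq> \<Inter>S\<close> .
    show "\<tau> ` \<Inter>S \<subseteq> L" using \<tau>(2) \<open>\<Inter>S \<subseteq> L'\<close> by blast
    show "ext_degree K (\<tau> ` \<Inter>S) = tau_index K M L"
      using K_embedding_image_degree[OF K \<tau>(1) \<open>is_subfield L'\<close> \<open>K \<subseteq> L'\<close> \<open>\<Inter>S \<subseteq> L'\<close>] deg tau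
      by simp
  qed
qed

theorem mainTheorem19:
  fixes K :: "complex set"
  assumes "number_field K"
  shows "\<not> (\<exists>L M. finite_ext K L \<and> finite_ext K M \<and> ext_degree K L = 4 \<and>
                  asc_index K L = 1 \<and> tau_index K M L = 2)"
proof
  assume "\<exists>L M. finite_ext K L \<and> finite_ext K M \<and> ext_degree K L = 4 \<and>
                  asc_index K L = 1 \<and> tau_index K M L = 2"
  then obtain L M where L: "finite_ext K L" and asc: "asc_index K L = 1"
    and tau: "tau_index K M L = 2" by blast
  obtain E where E: "is_subfield E" "K \<subseteq> E" "E \<subseteq> L" "ext_degree K E = 2"
    using tau_index_subextension[OF L] tau by (metis zero_neq_numeral)
  have "galois_over K E"
    using galois_over_degree_two E L unfolding finite_ext_def by blast
  then have "2 \<le> asc_index K L" using asc_index_ge[OF L E(2,3)] E(4) by simp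
  with asc show False by simp
qed

end
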